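(* Let $\Lambda$ be a row-finite $k$-graph with no sinks and no sources such that $\Lambda^0$ is finite. If the system $(\Lambda,\mathbb{Z}^k,d)$ is cofinal, then $\Lambda$ is primitive.
   Context: A $k$-graph is a countable category $\Lambda$ with a functor $d:\Lambda\to\mathbb{N}^k$ with unique factorisation. $\Lambda^n=d^{-1}(n)$, $\Lambda^0$ = vertices, $uXv=\{\lambda\in X:r(\lambda)=u,s(\lambda)=v\}$. Row-finite: $v\Lambda^n$ finite; no sources: $v\Lambda^n\ne\emptyset$ for $n\neq0$; no sinks: $\Lambda^nv\ne\emptyset$ for $n\ne0$. For $m,n\in\mathbb{N}^k$, $m>n$ means $m_i>n_i$ for all $i$. $\Lambda$ is primitive if there is $N\in\mathbb{N}^k$, $N>0$, with $u\Lambda^Nv\ne\emptyset$ for all $u,v\in\Lambda^0$. Regarding $d$ as a functor into the group $\mathbb{Z}^k$, the system $(\Lambda,\mathbb{Z}^k,d)$ is cofinal if for all $v,w\in\Lambda^0$ and $a,b\in\mathbb{Z}^k$ there is $N\in\mathbb{N}^k$ such that for every $\alpha\in w\Lambda^N$ there is $\beta\in v\Lambda s(\alpha)$ with $a+d(\beta)=b+d(\alpha)$. *)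

theory Defs
  imports Main "HOL-Library.Countable_Set"
begin

text \<open>Elements of N^k are represented as functions nat => nat vanishing at
  indices >= k; elements of Z^k as functions nat => int vanishing at indices >= k.\<close>

definition natvec :: "nat \<Rightarrow> (nat \<Rightarrow> nat) set" where
  "natvec k = {n. \<forall>i\<ge>k. n i = 0}"

definition intvec :: "nat \<Rightarrow> (nat \<Rightarrow> int) set" where
  "intvec k = {a. \<forall>i\<ge>k. a i = 0}"

text \<open>A small category is given by its set of morphisms Mor, range and source maps
  r, s (whose values are the identity morphisms), and a composition cmp
  (cmp l m = l m, defined when s l = r m).\<close>

definition is_kgraph ::
  "nat \<Rightarrow> 'a set \<Rightarrow> ('a \<Rightarrow> 'a) \<Rightarrow> ('a \<Rightarrow> 'a) \<Rightarrow> ('a \<Rightarrow> 'a \<Rightarrow> 'a) \<Rightarrow> ('a \<Rightarrow> nat \<Rightarrow> nat) \<Rightarrow> bool"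
where
  "is_kgraph k Mor r s cmp d \<longleftrightarrow>
     countable Mor \<and>
     (\<forall>l\<in>Mor. r l \<in> Mor \<and> s l \<in> Mor \<and>
        r (r l) = r l \<and> s (r l) = r l \<and> r (s l) = s l \<and> s (s l) = s l) \<and>
     (\<forall>l\<in>Mor. cmp (r l) l = l \<and> cmp l (s l) = l) \<and>
     (\<forall>l\<in>Mor. \<forall>m\<in>Mor. s l = r m \<longrightarrow>
        cmp l m \<in> Mor \<and> r (cmp l m) = r l \<and> s (cmp l m) = s m) \<and>
     (\<forall>l\<in>Mor. \<forall>m\<in>Mor. \<forall>n\<in>Mor. s l = r m \<and> s m = r n \<longrightarrow>
        cmp (cmp l m) n = cmp l (cmp m n)) \<and>
     (\<forall>l\<in>Mor. d l \<in> natvec k) \<and>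
     (\<forall>l\<in>Mor. d (r l) = (\<lambda>_. 0)) \<and>
     (\<forall>l\<in>Mor. \<forall>m\<in>Mor. s l = r m \<longrightarrow> d (cmp l m) = (\<lambda>i. d l i + d m i)) \<and>
     (\<forall>l\<in>Mor. \<forall>m\<in>natvec k. \<forall>n\<in>natvec k. d l = (\<lambda>i. m i + n i) \<longrightarrow>
        (\<exists>!p. fst p \<in> Mor \<and> snd p \<in> Mor \<and> s (fst p) = r (snd p) \<and>
               cmp (fst p) (snd p) = l \<and> d (fst p) = m \<and> d (snd p) = n))"

definition vertices :: "'a set \<Rightarrow> ('a \<Rightarrow> nat \<Rightarrow> nat) \<Rightarrow> 'a set" where
  "vertices Mor d = {l\<in>Mor. d l = (\<lambda>_. 0)}"

definition row_finite where
  "row_finite k Mor r d \<longleftrightarrow>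
     (\<forall>v\<in>vertices Mor d. \<forall>n\<in>natvec k. finite {l\<in>Mor. r l = v \<and> d l = n})"

definition no_sources where
  "no_sources k Mor r d \<longleftrightarrow>
     (\<forall>v\<in>vertices Mor d. \<forall>n\<in>natvec k. n \<noteq> (\<lambda>_. 0) \<longrightarrow> {l\<in>Mor. r l = v \<and> d l = n} \<noteq> {})"

definition no_sinks where
  "no_sinks k Mor s d \<longleftrightarrow>
     (\<forall>v\<in>vertices Mor d. \<forall>n\<in>natvec k. n \<noteq> (\<lambda>_. 0) \<longrightarrow> {l\<in>Mor. s l = v \<and> d l = n} \<noteq> {})"

definition primitive where
  "primitive k Mor r s d \<longleftrightarrow>
     (\<exists>N\<in>natvec k. (\<forall>i<k. N i > 0) \<and>
        (\<forall>u\<in>vertices Mor d. \<forall>v\<in>vertices Mor d. \<exists>l\<in>Mor. r l = u \<and> s l = v \<and> d l = N))"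

definition kg_cofinal where
  "kg_cofinal k Mor r s d \<longleftrightarrow>
     (\<forall>v\<in>vertices Mor d. \<forall>w\<in>vertices Mor d. \<forall>a\<in>intvec k. \<forall>b\<in>intvec k.
        \<exists>N\<in>natvec k. \<forall>\<alpha>\<in>Mor. r \<alpha> = w \<and> d \<alpha> = N \<longrightarrow>
          (\<exists>\<beta>\<in>Mor. r \<beta> = v \<and> s \<beta> = s \<alpha> \<and>
             (\<lambda>i. a i + int (d \<beta> i)) = (\<lambda>i. b i + int (d \<alpha> i))))"

end

theory Submission
  imports Defs
begin

text \<open>Cofinality with \<open>a = b = 0\<close> says: for vertices \<open>u, w\<close> there is a degree \<open>N\<close> such that
  every path in \<open>w\<Lambda>\<^sup>N\<close> can be rerouted to a path in \<open>u\<Lambda>\<^sup>N\<close> with the same source. By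
  unique factorisation this property persists when \<open>N\<close> is enlarged, so, \<open>\<Lambda>\<^sup>0\<close> being finite,
  a single strictly positive \<open>N\<close> works for all pairs. Given \<open>u, v\<close>, a path \<open>\<alpha>\<close> of degree \<open>N\<close>
  ending at \<open>v\<close> exists as there are no sinks, and rerouting it to \<open>u\<close> gives an element of
  \<open>u\<Lambda>\<^sup>Nv\<close>.\<close>

lemma kgraph_axioms:
  assumes "is_kgraph k Mor r s cmp d"
  shows kgraph_range_source: "\<And>l. l \<in> Mor \<Longrightarrow> r l \<in> Mor \<and> s l \<in> Mor \<and>
        r (r l) = r l \<and> s (r l) = r l \<and> r (s l) = s l \<and> s (s l) = s l"
   and kgraph_identities: "\<And>l. l \<in> Mor \<Longrightarrow> cmp (r l) l = l \<and> cmp l (s l) = l"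
   and kgraph_comp: "\<And>l m. l \<in> Mor \<Longrightarrow> m \<in> Mor \<Longrightarrow> s l = r m \<Longrightarrow>
        cmp l m \<in> Mor \<and> r (cmp l m) = r l \<and> s (cmp l m) = s m"
   and kgraph_degree_range: "\<And>l. l \<in> Mor \<Longrightarrow> d (r l) = (\<lambda>_. 0)"
   and kgraph_degree_comp: "\<And>l m. l \<in> Mor \<Longrightarrow> m \<in> Mor \<Longrightarrow> s l = r m \<Longrightarrow>
        d (cmp l m) = (\<lambda>i. d l i + d m i)"
   and kgraph_factorisation: "\<And>l m n. l \<in> Mor \<Longrightarrow> m \<in> natvec k \<Longrightarrow> n \<in> natvec k \<Longrightarrow>
        d l = (\<lambda>i. m i + n i) \<Longrightarrow>
        (\<exists>!p. fst p \<in> Mor \<and> snd p \<in> Mor \<and> s (fst p) = r (snd p) \<and>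
               cmp (fst p) (snd p) = l \<and> d (fst p) = m \<and> d (snd p) = n)"
  using assms unfolding is_kgraph_def by blast+

lemma kgraph_range_in_vertices:
  assumes "is_kgraph k Mor r s cmp d" and "l \<in> Mor"
  shows "r l \<in> vertices Mor d"
  using kgraph_range_source[OF assms] kgraph_degree_range[OF assms] by (simp add: vertices_def)

lemma kgraph_vertex_source:
  assumes K: "is_kgraph k Mor r s cmp d" and v: "v \<in> vertices Mor d"
  shows "s v = v"
proof -
  have vM: "v \<in> Mor" and dv: "d v = (\<lambda>_. 0)" using v by (auto simp: vertices_def)
  have zero: "(\<lambda>_. 0::nat) \<in> natvec k" by (simp add: natvec_def)
  define factors where "factors p \<longleftrightarrow> fst p \<in> Mor \<and> snd p \<in> Mor \<and> s (fst p) = r (snd p) \<and>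
    cmp (fst p) (snd p) = v \<and> d (fst p) = (\<lambda>_. 0) \<and> d (snd p) = (\<lambda>_. 0)" for p
  have "d v = (\<lambda>i. (0::nat) + 0)" using dv by simp
  from kgraph_factorisation[OF K vM zero zero this] have "\<exists>!p. factors p"
    unfolding factors_def by simp
  then have unique: "factors p \<Longrightarrow> factors q \<Longrightarrow> p = q" for p q
    by (elim alt_ex1E) blast
  have "factors (r v, v)" "factors (v, s v)"
    using kgraph_range_source[OF K vM] kgraph_identities[OF K vM] kgraph_degree_range[OF K vM]
      kgraph_degree_range[of k Mor r s cmp d "s v"] K vM dv
    unfolding factors_def by auto
  from unique[OF this] show ?thesis by simp
qed

lemma kgraph_exists_path_to:
  assumes K: "is_kgraph k Mor r s cmp d" and "no_sinks k Mor s d"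
    and v: "v \<in> vertices Mor d" and N: "N \<in> natvec k"
  obtains \<alpha> where "\<alpha> \<in> Mor" "s \<alpha> = v" "d \<alpha> = N"
proof (cases "N = (\<lambda>_. 0)")
  case True
  then show ?thesis using that[of v] v kgraph_vertex_source[OF K v] by (simp add: vertices_def)
next
  case False
  then show ?thesis using assms(2) v N that unfolding no_sinks_def by blast
qed

definition reroutable where
  "reroutable Mor r s d u w N \<longleftrightarrow> (\<forall>\<alpha>\<in>Mor. r \<alpha> = w \<and> d \<alpha> = N \<longrightarrow>
     (\<exists>\<beta>\<in>Mor. r \<beta> = u \<and> s \<beta> = s \<alpha> \<and> d \<beta> = N))"

lemma reroutable_mono:
  assumes K: "is_kgraph k Mor r s cmp d" and reroute: "reroutable Mor r s d u w N"
    and N: "N \<in> natvec k" and N': "N' \<in> natvec k" and le: "\<And>i. N i \<le> N' i"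
  shows "reroutable Mor r s d u w N'"
  unfolding reroutable_def
proof (intro ballI impI)
  fix \<alpha> assume \<alpha>: "\<alpha> \<in> Mor" "r \<alpha> = w \<and> d \<alpha> = N'"
  define n where "n = (\<lambda>i. N' i - N i)"
  have n: "n \<in> natvec k" using N N' by (auto simp: natvec_def n_def)
  have "d \<alpha> = (\<lambda>i. N i + n i)" using \<alpha> le by (auto simp: n_def)
  from kgraph_factorisation[OF K \<alpha>(1) N n this] obtain \<mu> \<nu> where
    \<mu>\<nu>: "\<mu> \<in> Mor" "\<nu> \<in> Mor" "s \<mu> = r \<nu>" "cmp \<mu> \<nu> = \<alpha>" "d \<mu> = N" "d \<nu> = n"
    by auto
  have "r \<mu> = w" "s \<nu> = s \<alpha>" using kgraph_comp[OF K \<mu>\<nu>(1-3)] \<mu>\<nu>(4) \<alpha> by auto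
  with reroute \<mu>\<nu>(1,3,5) obtain \<beta> where \<beta>: "\<beta> \<in> Mor" "r \<beta> = u" "s \<beta> = r \<nu>" "d \<beta> = N"
    unfolding reroutable_def by metis
  show "\<exists>\<beta>'\<in>Mor. r \<beta>' = u \<and> s \<beta>' = s \<alpha> \<and> d \<beta>' = N'"
  proof (intro bexI conjI)
    show "cmp \<beta> \<nu> \<in> Mor" "r (cmp \<beta> \<nu>) = u" "s (cmp \<beta> \<nu>) = s \<alpha>"
      using kgraph_comp[OF K \<beta>(1) \<mu>\<nu>(2)] \<beta> \<open>s \<nu> = s \<alpha>\<close> by auto
    have "d (cmp \<beta> \<nu>) = (\<lambda>i. N i + n i)"
      using kgraph_degree_comp[OF K \<beta>(1) \<mu>\<nu>(2)] \<beta>(3,4) \<mu>\<nu>(6) by simp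
    then show "d (cmp \<beta> \<nu>) = N'"
      using \<alpha>(2) \<open>d \<alpha> = (\<lambda>i. N i + n i)\<close> by simp
  qed
qed

lemma cofinal_reroutable:
  assumes "kg_cofinal k Mor r s d" and "u \<in> vertices Mor d" and "w \<in> vertices Mor d"
  shows "\<exists>N\<in>natvec k. reroutable Mor r s d u w N"
proof -
  have zero: "(\<lambda>_. 0::int) \<in> intvec k" by (simp add: intvec_def)
  have int_eq: "((\<lambda>i. int (f i)) = (\<lambda>i. int (g i))) = (f = g)" for f g :: "nat \<Rightarrow> nat"
    by (auto simp: fun_eq_iff)
  obtain N where N: "N \<in> natvec k" and cof: "\<forall>\<alpha>\<in>Mor. r \<alpha> = w \<and> d \<alpha> = N \<longrightarrow>
      (\<exists>\<beta>\<in>Mor. r \<beta> = u \<and> s \<beta> = s \<alpha> \<and>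
         (\<lambda>i. 0 + int (d \<beta> i)) = (\<lambda>i. 0 + int (d \<alpha> i)))"
    using assms(1)[unfolded kg_cofinal_def, rule_format, OF assms(2,3) zero zero] by blast
  have "reroutable Mor r s d u w N"
    unfolding reroutable_def using cof by (simp add: int_eq)
  with N show ?thesis by blast
qed

lemma natvec_finite_positive_upper_bound:
  assumes "finite A" and "\<And>x. x \<in> A \<Longrightarrow> f x \<in> natvec k"
  obtains N where "N \<in> natvec k" "\<And>i. i < k \<Longrightarrow> 0 < N i" "\<And>x i. x \<in> A \<Longrightarrow> f x i \<le> N i"
proof -
  define M where "M = 1 + (\<Sum>x\<in>A. \<Sum>i<k. f x i)"
  define N where "N = (\<lambda>i. if i < k then M else 0)"
  have "f x i \<le> N i" if x: "x \<in> A" for x i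
  proof (cases "i < k")
    case True
    have "f x i \<le> (\<Sum>i<k. f x i)" using True by (intro member_le_sum) auto
    also have "\<dots> \<le> (\<Sum>x\<in>A. \<Sum>i<k. f x i)" using x assms(1) by (intro member_le_sum) auto
    finally show ?thesis using True by (simp add: N_def M_def)
  next
    case False
    then show ?thesis using assms(2)[OF x] by (simp add: natvec_def)
  qed
  moreover have "N \<in> natvec k" "\<And>i. i < k \<Longrightarrow> 0 < N i" by (simp_all add: N_def M_def natvec_def)
  ultimately show thesis using that by blast
qed

lemma cofinal_uniformly_reroutable:
  assumes "finite (vertices Mor d)" and "kg_cofinal k Mor r s d" and K: "is_kgraph k Mor r s cmp d"
  obtains N where "N \<in> natvec k" "\<And>i. i < k \<Longrightarrow> 0 < N i"
    "\<And>u w. u \<in> vertices Mor d \<Longrightarrow> w \<in> vertices Mor d \<Longrightarrow> reroutable Mor r s d u w N"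
proof -
  let ?V = "vertices Mor d"
  define F where "F x = (SOME N. N \<in> natvec k \<and> reroutable Mor r s d (fst x) (snd x) N)" for x
  have F: "F x \<in> natvec k \<and> reroutable Mor r s d (fst x) (snd x) (F x)" if "x \<in> ?V \<times> ?V" for x
  proof -
    have "\<exists>N. N \<in> natvec k \<and> reroutable Mor r s d (fst x) (snd x) N"
      using cofinal_reroutable[OF assms(2), of "fst x" "snd x"] that by (auto simp: mem_Times_iff)
    then show ?thesis unfolding F_def by (rule someI_ex)
  qed
  have "finite (?V \<times> ?V)" using assms(1) by simp
  then obtain N where N: "N \<in> natvec k" "\<And>i. i < k \<Longrightarrow> 0 < N i"
    and bound: "\<And>x i. x \<in> ?V \<times> ?V \<Longrightarrow> F x i \<le> N i"
    by (rule natvec_finite_positive_upper_bound[OF _ F[THEN conjunct1]]) blast+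
  have "reroutable Mor r s d u w N" if "u \<in> ?V" "w \<in> ?V" for u w
  proof -
    have uw: "(u, w) \<in> ?V \<times> ?V" using that by simp
    have "reroutable Mor r s d u w (F (u, w))" "F (u, w) \<in> natvec k"
      using F[OF uw] by simp_all
    then show ?thesis by (rule reroutable_mono[OF K _ _ N(1)]) (rule bound[OF uw])
  qed
  with N that show thesis by blast
qed

theorem theorem7p1:
  fixes k :: nat and Mor :: "'a set" and r s :: "'a \<Rightarrow> 'a"
    and cmp :: "'a \<Rightarrow> 'a \<Rightarrow> 'a" and d :: "'a \<Rightarrow> nat \<Rightarrow> nat"
  assumes "is_kgraph k Mor r s cmp d"
    and "row_finite k Mor r d"
    and "no_sinks k Mor s d"
    and "no_sources k Mor r d"
    and "finite (vertices Mor d)"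
    and "kg_cofinal k Mor r s d"
  shows "primitive k Mor r s d"
proof -
  obtain N where N: "N \<in> natvec k" "\<And>i. i < k \<Longrightarrow> 0 < N i"
    and reroute: "\<And>u w. u \<in> vertices Mor d \<Longrightarrow> w \<in> vertices Mor d \<Longrightarrow> reroutable Mor r s d u w N"
    using cofinal_uniformly_reroutable[OF assms(5,6,1)] by blast
  have "\<exists>l\<in>Mor. r l = u \<and> s l = v \<and> d l = N"
    if u: "u \<in> vertices Mor d" and v: "v \<in> vertices Mor d" for u v
  proof -
    obtain \<alpha> where \<alpha>: "\<alpha> \<in> Mor" "s \<alpha> = v" "d \<alpha> = N"
      using kgraph_exists_path_to[OF assms(1,3) v N(1)] .
    have "reroutable Mor r s d u (r \<alpha>) N"
      using reroute[OF u kgraph_range_in_vertices[OF assms(1) \<alpha>(1)]] .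
    then show ?thesis using \<alpha> unfolding reroutable_def by auto
  qed
  then show ?thesis using N unfolding primitive_def by blast
qed

end
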